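(* Assume the standing setting below. Every separating measure $\mathsf Q$ for $R$ satisfies $$v_{\mathrm{MMV}}(0)\le\frac12\mathrm{Var}\Big(\frac{d\mathsf Q}{d\mathsf P}\Big).$$
   Context: Standing setting. $R$ is an $\mathbb{R}^d$-valued semimartingale on $[0,T]$ with $R_0=0$, independent increments, and instantaneously arbitrage-free. Instantaneous no-arbitrage means the following: - Let $h(x)=(x_i\mathbf 1_{\{|x_i|\le1\}})_i$, let $A$ be a deterministic right-continuous non-decreasing process, and let $(b^{R[1]},c^R,F^R)$ be deterministic differential characteristics of $R$ relative to $A$. - For all $t$ and row vectors $\lambda$: if $\lambda c^R_t=0$ and $F^R_t(\{\lambda x<0\})=0$, then either $F^R_t(\{\lambda x>0\})>0$ and $\lambda b^{R[1]}_t-\int\lambda h\,dF^R_t<0$, or $F^R_t(\{\lambda x>0\})=0$ and $\lambda b^{R[1]}_t=0$. Definitions. - $\Theta_{\mathrm{MMV}}$ is the set of $R$-integrable predictable $\vartheta$ with $\sup_{t\le T}(\vartheta\cdot R_t)^-\in L^2$. - $V_{\mathrm{MMV}}(W)=\sup_{Y\ge0,\,W-Y\in L^2}\big(\mathsf E[W-Y]-\frac12\mathrm{Var}(W-Y)\big)$. - $v_{\mathrm{MMV}}(0)=\sup_{\vartheta\in\Theta_{\mathrm{MMV}}}V_{\mathrm{MMV}}(\vartheta\cdot R_T)$. - A separating measure is a probability measure $\mathsf Q\ll\mathsf P$ with $d\mathsf Q/d\mathsf P\in L^2(\mathsf P)$ such that, for all $\vartheta\in\Theta_{\mathrm{MMV}}$,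 $\vartheta\cdot R_T\in L^1(\mathsf Q)$ and $\mathsf E^{\mathsf Q}[\vartheta\cdot R_T]\le0$. *)

theory Defs
  imports "HOL-Probability.Probability"
begin

definition L2 :: "'a measure \<Rightarrow> ('a \<Rightarrow> real) \<Rightarrow> bool" where
  "L2 M X \<longleftrightarrow> X \<in> borel_measurable M \<and> integrable M (\<lambda>x. (X x)\<^sup>2)"

text \<open>Monotone mean-variance value of a terminal wealth W (sup in ereal; empty sup = -infinity).\<close>
definition V_MMV :: "'a measure \<Rightarrow> ('a \<Rightarrow> real) \<Rightarrow> ereal" where
  "V_MMV M W = (SUP Y \<in> {Y. Y \<in> borel_measurable M \<and> (\<forall>x\<in>space M. 0 \<le> Y x)
                           \<and> L2 M (\<lambda>x. W x - Y x)}.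
      ereal ((\<integral>x. W x - Y x \<partial>M) - 1/2 * prob_space.variance M (\<lambda>x. W x - Y x)))"

text \<open>Optimal MMV value from zero initial wealth, where G is the set of terminal
  gains {theta . R_T | theta in Theta_MMV}.\<close>
definition v_MMV0 :: "'a measure \<Rightarrow> ('a \<Rightarrow> real) set \<Rightarrow> ereal" where
  "v_MMV0 M G = (SUP X \<in> G. V_MMV M X)"

definition separating_measure :: "'a measure \<Rightarrow> ('a \<Rightarrow> real) set \<Rightarrow> 'a measure \<Rightarrow> bool" where
  "separating_measure M G Q \<longleftrightarrow>
     prob_space Q \<and> sets Q = sets M \<and> absolutely_continuous M Q \<and>
     L2 M (\<lambda>x. enn2real (RN_deriv M Q x)) \<and>
     (\<forall>X\<in>G. integrable Q X \<and> (\<integral>x. X x \<partial>Q) \<le> 0)"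

end

theory Submission
  imports Defs
begin

text \<open>
  Write \<open>z = dQ/dP\<close> and let \<open>W = X - Y\<close> be any admissible terminal wealth
  (\<open>X\<close> a gain, \<open>Y \<ge> 0\<close> the amount thrown away). Since \<open>Q\<close> is separating,
  \<open>E[z W] = E\<^sub>Q[X] - E\<^sub>Q[Y] \<le> 0\<close>. Expanding \<open>0 \<le> Var(W + z)\<close> with \<open>E[z] = 1\<close> gives
  \<open>0 \<le> Var W + Var z + 2 E[z W] - 2 E[W]\<close>, hence
  \<open>E[W] - Var(W)/2 \<le> Var(z)/2\<close>; taking the supremum over all admissible \<open>W\<close>
  proves the bound.
\<close>

lemma (in finite_measure) L2_integrable: "L2 M f \<Longrightarrow> integrable M f"
  unfolding L2_def by (blast intro: square_integrable_imp_integrable)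

lemma L2_mult_integrable:
  assumes "L2 M f" "L2 M g"
  shows "integrable M (\<lambda>x. f x * g x)"
proof (rule Bochner_Integration.integrable_bound)
  have "f \<in> borel_measurable M" "g \<in> borel_measurable M"
    and "integrable M (\<lambda>x. (f x)\<^sup>2)" "integrable M (\<lambda>x. (g x)\<^sup>2)"
    using assms unfolding L2_def by blast+
  then show "integrable M (\<lambda>x. (f x)\<^sup>2 + (g x)\<^sup>2)" "(\<lambda>x. f x * g x) \<in> borel_measurable M"
    by (auto intro: Bochner_Integration.integrable_add borel_measurable_times)
  show "AE x in M. norm (f x * g x) \<le> norm ((f x)\<^sup>2 + (g x)\<^sup>2)"
  proof (rule AE_I2)
    fix x
    have "\<bar>f x * g x\<bar> \<le> (f x)\<^sup>2 + (g x)\<^sup>2"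
      using sum_squares_bound[of "\<bar>f x\<bar>" "\<bar>g x\<bar>"] abs_ge_zero[of "f x * g x"]
      unfolding abs_mult power2_abs by linarith
    then show "norm (f x * g x) \<le> norm ((f x)\<^sup>2 + (g x)\<^sup>2)"
      by simp
  qed
qed

lemma (in prob_space) variance_add:
  assumes "L2 M X" "L2 M Y"
  shows "variance (\<lambda>x. X x + Y x) =
    variance X + variance Y + 2 * (expectation (\<lambda>x. X x * Y x) - expectation X * expectation Y)"
proof -
  have [simp]: "integrable M X" "integrable M Y" "integrable M (\<lambda>x. X x * Y x)"
    "integrable M (\<lambda>x. (X x)\<^sup>2)" "integrable M (\<lambda>x. (Y x)\<^sup>2)"
    using assms L2_integrable L2_mult_integrable unfolding L2_def by blast+
  have sq: "(\<lambda>x. (X x + Y x)\<^sup>2) = (\<lambda>x. (X x)\<^sup>2 + (Y x)\<^sup>2 + 2 * (X x * Y x))"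
    by (simp add: power2_sum mult.assoc)
  have "variance (\<lambda>x. X x + Y x) =
      expectation (\<lambda>x. (X x + Y x)\<^sup>2) - (expectation (\<lambda>x. X x + Y x))\<^sup>2"
    by (rule variance_eq) (simp_all add: sq)
  also have "\<dots> = expectation (\<lambda>x. (X x)\<^sup>2) + expectation (\<lambda>x. (Y x)\<^sup>2)
      + 2 * expectation (\<lambda>x. X x * Y x) - (expectation X + expectation Y)\<^sup>2"
    by (simp add: sq)
  finally show ?thesis
    using variance_eq[of X] variance_eq[of Y] by (simp add: power2_sum)
qed

lemma (in prob_space) mean_minus_half_variance_le:
  assumes "L2 M W" "L2 M Z" "expectation Z = 1" "expectation (\<lambda>x. Z x * W x) \<le> 0"
  shows "expectation W - 1/2 * variance W \<le> 1/2 * variance Z"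
  using variance_positive[of "\<lambda>x. W x + Z x"] variance_add[OF assms(1,2)] assms(3,4)
  by (simp add: mult.commute)

lemma separating_measure_expectation_RN_deriv:
  assumes "prob_space M" "separating_measure M G Q"
  shows "(\<integral>x. enn2real (RN_deriv M Q x) \<partial>M) = 1"
proof -
  interpret prob_space M by fact
  have Q: "prob_space Q" "absolutely_continuous M Q" "sets Q = sets M"
    using assms(2) unfolding separating_measure_def by blast+
  have "(\<integral>x. enn2real (RN_deriv M Q x) \<partial>M) = (\<integral>x. 1 \<partial>Q)"
    using RN_deriv_integral[OF prob_space_imp_sigma_finite[OF Q(1)] Q(2,3), of "\<lambda>_. 1"] Q(1) by simp
  then show ?thesis
    using prob_space.prob_space[OF Q(1)] by simp
qed

lemma separating_measure_RN_deriv_pairing_nonpos: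
  assumes "prob_space M" "separating_measure M G Q" "X \<in> G"
    and Y_nonneg: "\<forall>x\<in>space M. 0 \<le> Y x" and W: "L2 M (\<lambda>x. X x - Y x)"
  shows "(\<integral>x. enn2real (RN_deriv M Q x) * (X x - Y x) \<partial>M) \<le> 0"
proof -
  interpret prob_space M by fact
  have Q: "prob_space Q" "absolutely_continuous M Q" "sets Q = sets M"
    and z: "L2 M (\<lambda>x. enn2real (RN_deriv M Q x))"
    and X: "integrable Q X" "(\<integral>x. X x \<partial>Q) \<le> 0"
    using assms(2,3) unfolding separating_measure_def by blast+
  note RN = RN_deriv_integrable[OF prob_space_imp_sigma_finite[OF Q(1)] Q(2,3)]
    RN_deriv_integral[OF prob_space_imp_sigma_finite[OF Q(1)] Q(2,3)]
  have W_meas: "(\<lambda>x. X x - Y x) \<in> borel_measurable M"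
    using W unfolding L2_def by blast
  have W_Q: "integrable Q (\<lambda>x. X x - Y x)"
    using RN(1)[OF W_meas] L2_mult_integrable[OF z W] by simp
  have Y_Q: "integrable Q Y"
    using Bochner_Integration.integrable_diff[OF X(1) W_Q] by simp
  have "0 \<le> (\<integral>x. Y x \<partial>Q)"
    using Y_nonneg sets_eq_imp_space_eq[OF Q(3)] by (intro Bochner_Integration.integral_nonneg) auto
  then have "(\<integral>x. X x - Y x \<partial>Q) \<le> 0"
    using X(2) Bochner_Integration.integral_diff[OF X(1) Y_Q] by simp
  then show ?thesis
    using RN(2)[OF W_meas] by simp
qed

theorem proposition2p22:
  fixes M :: "'a measure" and G :: "('a \<Rightarrow> real) set" and Q :: "'a measure"
  assumes "prob_space M"
    and "\<forall>X\<in>G. X \<in> borel_measurable M \<and> L2 M (\<lambda>x. max 0 (- X x))"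
    and "(\<lambda>x. 0) \<in> G"
    and "separating_measure M G Q"
  shows "v_MMV0 M G \<le> ereal (1/2 * prob_space.variance M (\<lambda>x. enn2real (RN_deriv M Q x)))"
  unfolding v_MMV0_def V_MMV_def
proof (intro SUP_least)
  interpret prob_space M by fact
  let ?z = "\<lambda>x. enn2real (RN_deriv M Q x)"
  fix X Y
  assume X: "X \<in> G" and "Y \<in> {Y. Y \<in> borel_measurable M \<and> (\<forall>x\<in>space M. 0 \<le> Y x)
                                  \<and> L2 M (\<lambda>x. X x - Y x)}"
  then have Y_nonneg: "\<forall>x\<in>space M. 0 \<le> Y x" and W: "L2 M (\<lambda>x. X x - Y x)"
    by blast+
  have z: "L2 M ?z"
    using assms(4) unfolding separating_measure_def by blast
  have "expectation (\<lambda>x. X x - Y x) - 1/2 * variance (\<lambda>x. X x - Y x) \<le> 1/2 * variance ?z"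
    using separating_measure_expectation_RN_deriv[OF assms(1,4)]
      separating_measure_RN_deriv_pairing_nonpos[OF assms(1,4) X Y_nonneg W]
    by (rule mean_minus_half_variance_le[OF W z])
  then show "ereal ((\<integral>x. X x - Y x \<partial>M) - 1/2 * variance (\<lambda>x. X x - Y x))
      \<le> ereal (1/2 * variance ?z)"
    by simp
qed

end
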